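(* Let $(\mathcal R,\Sigma,\Delta)$ be a right triangulated category with right semi-equivalence. Then $\mathcal R$, identified with the full subcategory of $\mathcal S(\mathcal R)$ consisting of objects isomorphic to some $(A,0)$ with $A\in\mathcal R$, is closed under extensions in the triangulated category $\mathcal S(\mathcal R)$: for every triangle $X\to Y\to Z\to\Sigma X$ in $\mathcal S(\mathcal R)$ with $X,Z\in\mathcal R$, also $Y\in\mathcal R$.
   Context: A right triangulated category $(\mathcal R,\Sigma,\Delta)$: additive category, additive endofunctor $\Sigma$, class of right triangles $A\to B\to C\to\Sigma A$ satisfying the axioms of a triangulated category except that $\Sigma$ need not be an equivalence and only rotation to the right is required. $\Sigma$ is a right semi-equivalence if fully faithful with essential image $\Sigma\mathcal R$ closed under extensions in right triangles. Stabilisation (for fully faithful $\Sigma$): $\mathcal S(\mathcal R)$ has objects $(A,n)$ with $A\in\mathcal R$, $n\in\mathbb Z$, morphisms $\mathcal S(\mathcal R)((A,n),(B,m))=\mathcal R(\Sigma^{n-k}A,\Sigma^{m-k}B)$ for any $k\le\min\{n,m\}$, shift $\Sigma(A,n)=(A,n+1)$, and triangles the sequences isomorphic to $(A,n)\xrightarrow{x}(B,m)\xrightarrow{y}(C,l)\xrightarrow{z}(A,n+1)$ such that for some (equivalently, when $\Sigma$ is a right semi-equivalence, every) $k\le\min\{n,m,l\}$ the sequence $\Sigma^{n-k}A\to\Sigma^{m-k}B\to\Sigma^{l-k}C\to\Sigma^{n+1-k}A$ with maps $(-1)^k$ times the representatives of $x,y,z$ is a right triangle in $\mathcal R$. $\mathcal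 S(\mathcal R)$ is triangulated. *)

theory Defs
  imports Main
begin

text \<open>A right triangulated category is encoded as a record: objects of type 'o,
morphisms of type 'm, hom-sets, composition (cmp g f = g after f), identities,
the preadditive structure (addition, negation, zero morphisms), the endofunctor
Sigma (on objects shO, on morphisms shM) and the class of right triangles Tri,
whose elements are tuples (A, B, C, f, g, h) standing for A -f-> B -g-> C -h-> Sigma A.\<close>

record ('o, 'm) rtcat =
  Ob    :: "'o set"
  Hom   :: "'o \<Rightarrow> 'o \<Rightarrow> 'm set"
  cmp   :: "'m \<Rightarrow> 'm \<Rightarrow> 'm"
  idm   :: "'o \<Rightarrow> 'm"
  madd  :: "'m \<Rightarrow> 'm \<Rightarrow> 'm"
  mneg  :: "'m \<Rightarrow> 'm"
  mzero :: "'o \<Rightarrow> 'o \<Rightarrow> 'm"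
  shO   :: "'o \<Rightarrow> 'o"
  shM   :: "'m \<Rightarrow> 'm"
  Tri   :: "('o \<times> 'o \<times> 'o \<times> 'm \<times> 'm \<times> 'm) set"

definition is_category :: "('o, 'm, 'x) rtcat_scheme \<Rightarrow> bool" where
  "is_category R \<longleftrightarrow>
     (\<forall>A\<in>Ob R. \<forall>B\<in>Ob R. \<forall>C\<in>Ob R. \<forall>f g.
        f \<in> Hom R A B \<longrightarrow> g \<in> Hom R B C \<longrightarrow> cmp R g f \<in> Hom R A C) \<and>
     (\<forall>A\<in>Ob R. \<forall>B\<in>Ob R. \<forall>C\<in>Ob R. \<forall>D\<in>Ob R. \<forall>f g h.
        f \<in> Hom R A B \<longrightarrow> g \<in> Hom R B C \<longrightarrow> h \<in> Hom R C D \<longrightarrow>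
        cmp R h (cmp R g f) = cmp R (cmp R h g) f) \<and>
     (\<forall>A\<in>Ob R. idm R A \<in> Hom R A A) \<and>
     (\<forall>A\<in>Ob R. \<forall>B\<in>Ob R. \<forall>f. f \<in> Hom R A B \<longrightarrow>
        cmp R (idm R B) f = f \<and> cmp R f (idm R A) = f)"

definition is_preadditive :: "('o, 'm, 'x) rtcat_scheme \<Rightarrow> bool" where
  "is_preadditive R \<longleftrightarrow>
     (\<forall>A\<in>Ob R. \<forall>B\<in>Ob R.
        mzero R A B \<in> Hom R A B \<and>
        (\<forall>f g. f \<in> Hom R A B \<longrightarrow> g \<in> Hom R A B \<longrightarrow> madd R f g \<in> Hom R A B) \<and>
        (\<forall>f. f \<in> Hom R A B \<longrightarrow> mneg R f \<in> Hom R A B) \<and>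
        (\<forall>f g h. f \<in> Hom R A B \<longrightarrow> g \<in> Hom R A B \<longrightarrow> h \<in> Hom R A B \<longrightarrow>
           madd R (madd R f g) h = madd R f (madd R g h)) \<and>
        (\<forall>f g. f \<in> Hom R A B \<longrightarrow> g \<in> Hom R A B \<longrightarrow> madd R f g = madd R g f) \<and>
        (\<forall>f. f \<in> Hom R A B \<longrightarrow> madd R f (mzero R A B) = f) \<and>
        (\<forall>f. f \<in> Hom R A B \<longrightarrow> madd R f (mneg R f) = mzero R A B)) \<and>
     (\<forall>A\<in>Ob R. \<forall>B\<in>Ob R. \<forall>C\<in>Ob R. \<forall>f f' g.
        f \<in> Hom R A B \<longrightarrow> f' \<in> Hom R A B \<longrightarrow> g \<in> Hom R B C \<longrightarrow>
        cmp R g (madd R f f') = madd R (cmp R g f) (cmp R g f')) \<and>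
     (\<forall>A\<in>Ob R. \<forall>B\<in>Ob R. \<forall>C\<in>Ob R. \<forall>f g g'.
        f \<in> Hom R A B \<longrightarrow> g \<in> Hom R B C \<longrightarrow> g' \<in> Hom R B C \<longrightarrow>
        cmp R (madd R g g') f = madd R (cmp R g f) (cmp R g' f))"

definition is_zero_obj :: "('o, 'm, 'x) rtcat_scheme \<Rightarrow> 'o \<Rightarrow> bool" where
  "is_zero_obj R Z \<longleftrightarrow> Z \<in> Ob R \<and>
     (\<forall>A\<in>Ob R. (\<exists>!f. f \<in> Hom R A Z) \<and> (\<exists>!f. f \<in> Hom R Z A))"

definition has_biproducts :: "('o, 'm, 'x) rtcat_scheme \<Rightarrow> bool" where
  "has_biproducts R \<longleftrightarrow>
     (\<forall>A\<in>Ob R. \<forall>B\<in>Ob R. \<exists>P\<in>Ob R. \<exists>i1 i2 p1 p2.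
        i1 \<in> Hom R A P \<and> i2 \<in> Hom R B P \<and> p1 \<in> Hom R P A \<and> p2 \<in> Hom R P B \<and>
        cmp R p1 i1 = idm R A \<and> cmp R p2 i2 = idm R B \<and>
        cmp R p1 i2 = mzero R B A \<and> cmp R p2 i1 = mzero R A B \<and>
        madd R (cmp R i1 p1) (cmp R i2 p2) = idm R P)"

definition is_additive :: "('o, 'm, 'x) rtcat_scheme \<Rightarrow> bool" where
  "is_additive R \<longleftrightarrow> is_category R \<and> is_preadditive R \<and>
     (\<exists>Z. is_zero_obj R Z) \<and> has_biproducts R"

definition additive_shift :: "('o, 'm, 'x) rtcat_scheme \<Rightarrow> bool" where
  "additive_shift R \<longleftrightarrow>
     (\<forall>A\<in>Ob R. shO R A \<in> Ob R) \<and>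
     (\<forall>A\<in>Ob R. \<forall>B\<in>Ob R. \<forall>f. f \<in> Hom R A B \<longrightarrow> shM R f \<in> Hom R (shO R A) (shO R B)) \<and>
     (\<forall>A\<in>Ob R. shM R (idm R A) = idm R (shO R A)) \<and>
     (\<forall>A\<in>Ob R. \<forall>B\<in>Ob R. \<forall>C\<in>Ob R. \<forall>f g.
        f \<in> Hom R A B \<longrightarrow> g \<in> Hom R B C \<longrightarrow> shM R (cmp R g f) = cmp R (shM R g) (shM R f)) \<and>
     (\<forall>A\<in>Ob R. \<forall>B\<in>Ob R. \<forall>f g.
        f \<in> Hom R A B \<longrightarrow> g \<in> Hom R A B \<longrightarrow> shM R (madd R f g) = madd R (shM R f) (shM R g))"

definition iso_mor :: "('o, 'm, 'x) rtcat_scheme \<Rightarrow> 'o \<Rightarrow> 'o \<Rightarrow> 'm \<Rightarrow> bool" where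
  "iso_mor R A B f \<longleftrightarrow> f \<in> Hom R A B \<and>
     (\<exists>g. g \<in> Hom R B A \<and> cmp R g f = idm R A \<and> cmp R f g = idm R B)"

definition isomorphic :: "('o, 'm, 'x) rtcat_scheme \<Rightarrow> 'o \<Rightarrow> 'o \<Rightarrow> bool" where
  "isomorphic R A B \<longleftrightarrow> A \<in> Ob R \<and> B \<in> Ob R \<and> (\<exists>f. iso_mor R A B f)"

definition well_typed_tri :: "('o, 'm, 'x) rtcat_scheme \<Rightarrow> 'o \<times> 'o \<times> 'o \<times> 'm \<times> 'm \<times> 'm \<Rightarrow> bool" where
  "well_typed_tri R t \<longleftrightarrow> (case t of (A, B, C, f, g, h) \<Rightarrow>
     A \<in> Ob R \<and> B \<in> Ob R \<and> C \<in> Ob R \<and>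
     f \<in> Hom R A B \<and> g \<in> Hom R B C \<and> h \<in> Hom R C (shO R A))"

definition right_triangulated :: "('o, 'm, 'x) rtcat_scheme \<Rightarrow> bool" where
  "right_triangulated R \<longleftrightarrow>
     is_additive R \<and> additive_shift R \<and>
     (\<forall>t\<in>Tri R. well_typed_tri R t) \<and>
     \<comment> \<open>RT1 (a): closed under isomorphisms of triangles\<close>
     (\<forall>A B C f g h A' B' C' f' g' h' a b c.
        (A, B, C, f, g, h) \<in> Tri R \<longrightarrow> well_typed_tri R (A', B', C', f', g', h') \<longrightarrow>
        iso_mor R A A' a \<longrightarrow> iso_mor R B B' b \<longrightarrow> iso_mor R C C' c \<longrightarrow>
        cmp R b f = cmp R f' a \<longrightarrow> cmp R c g = cmp R g' b \<longrightarrow>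
        cmp R (shM R a) h = cmp R h' c \<longrightarrow>
        (A', B', C', f', g', h') \<in> Tri R) \<and>
     \<comment> \<open>RT1 (b): A -> A -> 0 -> Sigma A\<close>
     (\<forall>A\<in>Ob R. \<forall>Z. is_zero_obj R Z \<longrightarrow>
        (A, A, Z, idm R A, mzero R A Z, mzero R Z (shO R A)) \<in> Tri R) \<and>
     \<comment> \<open>RT1 (c): every morphism embeds in a right triangle\<close>
     (\<forall>A\<in>Ob R. \<forall>B\<in>Ob R. \<forall>f. f \<in> Hom R A B \<longrightarrow> (\<exists>C g h. (A, B, C, f, g, h) \<in> Tri R)) \<and>
     \<comment> \<open>RT2: rotation to the right\<close>
     (\<forall>A B C f g h. (A, B, C, f, g, h) \<in> Tri R \<longrightarrow>
        (B, C, shO R A, g, h, mneg R (shM R f)) \<in> Tri R) \<and>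
     \<comment> \<open>RT3: morphism axiom\<close>
     (\<forall>A B C f g h A' B' C' f' g' h' a b.
        (A, B, C, f, g, h) \<in> Tri R \<longrightarrow> (A', B', C', f', g', h') \<in> Tri R \<longrightarrow>
        a \<in> Hom R A A' \<longrightarrow> b \<in> Hom R B B' \<longrightarrow> cmp R b f = cmp R f' a \<longrightarrow>
        (\<exists>c. c \<in> Hom R C C' \<and> cmp R c g = cmp R g' b \<and> cmp R (shM R a) h = cmp R h' c)) \<and>
     \<comment> \<open>RT4: octahedral axiom\<close>
     (\<forall>X Y Z Z' X' Y' x u d y j i v e.
        (X, Y, Z', x, u, d) \<in> Tri R \<longrightarrow>
        (Y, Z, X', y, j, i) \<in> Tri R \<longrightarrow>
        (X, Z, Y', cmp R y x, v, e) \<in> Tri R \<longrightarrow>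
        (\<exists>f g. f \<in> Hom R Z' Y' \<and> g \<in> Hom R Y' X' \<and>
           (Z', Y', X', f, g, cmp R (shM R u) i) \<in> Tri R \<and>
           cmp R f u = cmp R v y \<and> cmp R e f = d \<and>
           cmp R g v = j \<and> cmp R i g = cmp R (shM R x) e))"

definition ess_image_shift :: "('o, 'm, 'x) rtcat_scheme \<Rightarrow> 'o set" where
  "ess_image_shift R = {X \<in> Ob R. \<exists>Y\<in>Ob R. isomorphic R X (shO R Y)}"

definition right_semi_equivalence :: "('o, 'm, 'x) rtcat_scheme \<Rightarrow> bool" where
  "right_semi_equivalence R \<longleftrightarrow>
     (\<forall>A\<in>Ob R. \<forall>B\<in>Ob R. bij_betw (shM R) (Hom R A B) (Hom R (shO R A) (shO R B))) \<and>
     (\<forall>A B C f g h. (A, B, C, f, g, h) \<in> Tri R \<longrightarrow>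
        A \<in> ess_image_shift R \<longrightarrow> C \<in> ess_image_shift R \<longrightarrow> B \<in> ess_image_shift R)"

text \<open>A morphism (A,n) -> (B,m) is represented by a pair (k, f) with k \<le> min n m and
f \<in> R(Sigma^(n-k) A, Sigma^(m-k) B); two representatives are identified when they
agree after applying Sigma down to a common level (this is the identification
R(Sigma^(n-k)A, Sigma^(m-k)B) = R(Sigma^(n-k+1)A, Sigma^(m-k+1)B) via Sigma).\<close>

definition lvl :: "('o, 'm, 'x) rtcat_scheme \<Rightarrow> int \<Rightarrow> 'o \<times> int \<Rightarrow> 'o" where
  "lvl R k X = (shO R ^^ nat (snd X - k)) (fst X)"

definition at_lvl :: "('o, 'm, 'x) rtcat_scheme \<Rightarrow> int \<Rightarrow> int \<times> 'm \<Rightarrow> 'm" where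
  "at_lvl R j u = (shM R ^^ nat (fst u - j)) (snd u)"

definition S_obj :: "('o, 'm, 'x) rtcat_scheme \<Rightarrow> 'o \<times> int \<Rightarrow> bool" where
  "S_obj R X \<longleftrightarrow> fst X \<in> Ob R"

definition S_hom :: "('o, 'm, 'x) rtcat_scheme \<Rightarrow> 'o \<times> int \<Rightarrow> 'o \<times> int \<Rightarrow> int \<times> 'm \<Rightarrow> bool" where
  "S_hom R X Y u \<longleftrightarrow> S_obj R X \<and> S_obj R Y \<and> fst u \<le> snd X \<and> fst u \<le> snd Y \<and>
     snd u \<in> Hom R (lvl R (fst u) X) (lvl R (fst u) Y)"

definition S_eq :: "('o, 'm, 'x) rtcat_scheme \<Rightarrow> int \<times> 'm \<Rightarrow> int \<times> 'm \<Rightarrow> bool" where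
  "S_eq R u v \<longleftrightarrow> at_lvl R (min (fst u) (fst v)) u = at_lvl R (min (fst u) (fst v)) v"

definition S_comp :: "('o, 'm, 'x) rtcat_scheme \<Rightarrow> int \<times> 'm \<Rightarrow> int \<times> 'm \<Rightarrow> int \<times> 'm" where
  "S_comp R v u = (let j = min (fst u) (fst v) in (j, cmp R (at_lvl R j v) (at_lvl R j u)))"

definition S_id :: "('o, 'm, 'x) rtcat_scheme \<Rightarrow> 'o \<times> int \<Rightarrow> int \<times> 'm" where
  "S_id R X = (snd X, idm R (fst X))"

definition S_shift_obj :: "'o \<times> int \<Rightarrow> 'o \<times> int" where
  "S_shift_obj X = (fst X, snd X + 1)"

definition S_shift_mor :: "int \<times> 'm \<Rightarrow> int \<times> 'm" where
  "S_shift_mor u = (fst u + 1, snd u)"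

definition S_iso :: "('o, 'm, 'x) rtcat_scheme \<Rightarrow> 'o \<times> int \<Rightarrow> 'o \<times> int \<Rightarrow> int \<times> 'm \<Rightarrow> bool" where
  "S_iso R X Y a \<longleftrightarrow> S_hom R X Y a \<and>
     (\<exists>b. S_hom R Y X b \<and> S_eq R (S_comp R b a) (S_id R X) \<and> S_eq R (S_comp R a b) (S_id R Y))"

definition S_isomorphic :: "('o, 'm, 'x) rtcat_scheme \<Rightarrow> 'o \<times> int \<Rightarrow> 'o \<times> int \<Rightarrow> bool" where
  "S_isomorphic R X Y \<longleftrightarrow> (\<exists>a. S_iso R X Y a)"

definition sgn_mor :: "('o, 'm, 'x) rtcat_scheme \<Rightarrow> int \<Rightarrow> 'm \<Rightarrow> 'm" where
  "sgn_mor R k f = (if even k then f else mneg R f)"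

definition S_std_tri :: "('o, 'm, 'x) rtcat_scheme \<Rightarrow> 'o \<times> int \<Rightarrow> 'o \<times> int \<Rightarrow> 'o \<times> int \<Rightarrow>
    int \<times> 'm \<Rightarrow> int \<times> 'm \<Rightarrow> int \<times> 'm \<Rightarrow> bool" where
  "S_std_tri R X Y Z x y z \<longleftrightarrow>
     S_hom R X Y x \<and> S_hom R Y Z y \<and> S_hom R Z (S_shift_obj X) z \<and>
     (\<exists>k x0 y0 z0. k \<le> snd X \<and> k \<le> snd Y \<and> k \<le> snd Z \<and>
        S_hom R X Y (k, x0) \<and> S_hom R Y Z (k, y0) \<and> S_hom R Z (S_shift_obj X) (k, z0) \<and>
        S_eq R x (k, x0) \<and> S_eq R y (k, y0) \<and> S_eq R z (k, z0) \<and>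
        (lvl R k X, lvl R k Y, lvl R k Z, sgn_mor R k x0, sgn_mor R k y0, sgn_mor R k z0) \<in> Tri R)"

definition S_tri :: "('o, 'm, 'x) rtcat_scheme \<Rightarrow> 'o \<times> int \<Rightarrow> 'o \<times> int \<Rightarrow> 'o \<times> int \<Rightarrow>
    int \<times> 'm \<Rightarrow> int \<times> 'm \<Rightarrow> int \<times> 'm \<Rightarrow> bool" where
  "S_tri R X Y Z x y z \<longleftrightarrow>
     S_hom R X Y x \<and> S_hom R Y Z y \<and> S_hom R Z (S_shift_obj X) z \<and>
     (\<exists>X' Y' Z' x' y' z' a b c.
        S_std_tri R X' Y' Z' x' y' z' \<and>
        S_iso R X X' a \<and> S_iso R Y Y' b \<and> S_iso R Z Z' c \<and>
        S_eq R (S_comp R b x) (S_comp R x' a) \<and>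
        S_eq R (S_comp R c y) (S_comp R y' b) \<and>
        S_eq R (S_comp R (S_shift_mor a) z) (S_comp R z' c))"

definition in_R :: "('o, 'm, 'x) rtcat_scheme \<Rightarrow> 'o \<times> int \<Rightarrow> bool" where
  "in_R R X \<longleftrightarrow> (\<exists>A\<in>Ob R. S_isomorphic R X (A, 0))"

end

theory Submission
  imports Defs
begin

(* At every sufficiently low level k, a triangle of S(R) is isomorphic to a right triangle of R,
   and an object of S(R) lying in R is isomorphic at level k <= 0 to the (-k)-fold shift of an
   object of R. So it suffices to show: if P -> Q -> C -> \<Sigma>P is a right triangle with
   P = \<Sigma>^t P0 and C = \<Sigma>^t C0 up to isomorphism, then Q = \<Sigma>^t Q0 for some Q0. Closure of the essential image of \<Sigma> under extensions gives
   Q = \<Sigma>Q1; by fullness the map P -> Q desuspends to f1 : P1 -> Q1, and the shifted triangle on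
   f1 has third vertex \<Sigma>C1 isomorphic to C, because with \<Sigma> fully faithful the third vertex of a
   right triangle is unique up to isomorphism (a comparison endomorphism differs from the identity
   by a square-zero map). Faithfulness then gives C1 = \<Sigma>^(t-1) C0. *)

locale right_triangulated_cat =
  fixes R :: "('o, 'm, 'x) rtcat_scheme"
  assumes right_triangulated: "right_triangulated R"
begin

abbreviation cmpR (infixr "\<cdot>" 70) where "g \<cdot> f \<equiv> cmp R g f"
abbreviation maddR (infixl "\<oplus>" 65) where "f \<oplus> g \<equiv> madd R f g"
abbreviation mnegR ("\<ominus> _" [80] 80) where "\<ominus> f \<equiv> mneg R f"

lemma category: "is_category R"
  and preadditive: "is_preadditive R"
  and zero_object_exists: "\<exists>Z. is_zero_obj R Z"
  and shift_additive: "additive_shift R"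
  using right_triangulated unfolding right_triangulated_def is_additive_def by simp_all

lemma comp_hom: "\<lbrakk>A \<in> Ob R; B \<in> Ob R; C \<in> Ob R; f \<in> Hom R A B; g \<in> Hom R B C\<rbrakk> \<Longrightarrow> g \<cdot> f \<in> Hom R A C"
  and comp_assoc: "\<lbrakk>A \<in> Ob R; B \<in> Ob R; C \<in> Ob R; D \<in> Ob R; f \<in> Hom R A B; g \<in> Hom R B C; h \<in> Hom R C D\<rbrakk>
      \<Longrightarrow> h \<cdot> (g \<cdot> f) = (h \<cdot> g) \<cdot> f"
  and id_hom: "A \<in> Ob R \<Longrightarrow> idm R A \<in> Hom R A A"
  and id_left: "\<lbrakk>A \<in> Ob R; B \<in> Ob R; f \<in> Hom R A B\<rbrakk> \<Longrightarrow> idm R B \<cdot> f = f"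
  and id_right: "\<lbrakk>A \<in> Ob R; B \<in> Ob R; f \<in> Hom R A B\<rbrakk> \<Longrightarrow> f \<cdot> idm R A = f"
  using category unfolding is_category_def by blast+

lemma zero_hom: "\<lbrakk>A \<in> Ob R; B \<in> Ob R\<rbrakk> \<Longrightarrow> mzero R A B \<in> Hom R A B"
  and add_hom: "\<lbrakk>A \<in> Ob R; B \<in> Ob R; f \<in> Hom R A B; g \<in> Hom R A B\<rbrakk> \<Longrightarrow> f \<oplus> g \<in> Hom R A B"
  and neg_hom: "\<lbrakk>A \<in> Ob R; B \<in> Ob R; f \<in> Hom R A B\<rbrakk> \<Longrightarrow> \<ominus> f \<in> Hom R A B"
  and add_zero_right: "\<lbrakk>A \<in> Ob R; B \<in> Ob R; f \<in> Hom R A B\<rbrakk> \<Longrightarrow> f \<oplus> mzero R A B = f"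
  and add_neg_right: "\<lbrakk>A \<in> Ob R; B \<in> Ob R; f \<in> Hom R A B\<rbrakk> \<Longrightarrow> f \<oplus> \<ominus> f = mzero R A B"
  and comp_add_distrib_left: "\<lbrakk>A \<in> Ob R; B \<in> Ob R; C \<in> Ob R; f \<in> Hom R A B; f' \<in> Hom R A B; g \<in> Hom R B C\<rbrakk>
      \<Longrightarrow> g \<cdot> (f \<oplus> f') = g \<cdot> f \<oplus> g \<cdot> f'"
  and comp_add_distrib_right: "\<lbrakk>A \<in> Ob R; B \<in> Ob R; C \<in> Ob R; f \<in> Hom R A B; g \<in> Hom R B C; g' \<in> Hom R B C\<rbrakk>
      \<Longrightarrow> (g \<oplus> g') \<cdot> f = g \<cdot> f \<oplus> g' \<cdot> f"
  using preadditive unfolding is_preadditive_def by simp_all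

lemma add_assoc: "\<lbrakk>A \<in> Ob R; B \<in> Ob R; f \<in> Hom R A B; g \<in> Hom R A B; h \<in> Hom R A B\<rbrakk>
      \<Longrightarrow> f \<oplus> g \<oplus> h = f \<oplus> (g \<oplus> h)"
  and add_commute: "\<lbrakk>A \<in> Ob R; B \<in> Ob R; f \<in> Hom R A B; g \<in> Hom R A B\<rbrakk> \<Longrightarrow> f \<oplus> g = g \<oplus> f"
  using preadditive unfolding is_preadditive_def by meson+

lemma shift_ob: "A \<in> Ob R \<Longrightarrow> shO R A \<in> Ob R"
  and shift_hom: "\<lbrakk>A \<in> Ob R; B \<in> Ob R; f \<in> Hom R A B\<rbrakk> \<Longrightarrow> shM R f \<in> Hom R (shO R A) (shO R B)"
  and shift_id: "A \<in> Ob R \<Longrightarrow> shM R (idm R A) = idm R (shO R A)"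
  and shift_comp: "\<lbrakk>A \<in> Ob R; B \<in> Ob R; C \<in> Ob R; f \<in> Hom R A B; g \<in> Hom R B C\<rbrakk>
      \<Longrightarrow> shM R (g \<cdot> f) = shM R g \<cdot> shM R f"
  using shift_additive unfolding additive_shift_def by simp_all

lemma tri_well_typed: "(A, B, C, f, g, h) \<in> Tri R \<Longrightarrow>
    A \<in> Ob R \<and> B \<in> Ob R \<and> C \<in> Ob R \<and> f \<in> Hom R A B \<and> g \<in> Hom R B C \<and> h \<in> Hom R C (shO R A)"
  using right_triangulated unfolding right_triangulated_def well_typed_tri_def by (elim conjE) fastforce

lemma tri_trivial: "\<lbrakk>A \<in> Ob R; is_zero_obj R Z\<rbrakk>
    \<Longrightarrow> (A, A, Z, idm R A, mzero R A Z, mzero R Z (shO R A)) \<in> Tri R"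
  and tri_exists: "\<lbrakk>A \<in> Ob R; B \<in> Ob R; f \<in> Hom R A B\<rbrakk> \<Longrightarrow> \<exists>C g h. (A, B, C, f, g, h) \<in> Tri R"
  and tri_rotate: "(A, B, C, f, g, h) \<in> Tri R \<Longrightarrow> (B, C, shO R A, g, h, \<ominus> shM R f) \<in> Tri R"
  and tri_morphism: "\<lbrakk>(A, B, C, f, g, h) \<in> Tri R; (A', B', C', f', g', h') \<in> Tri R;
      a \<in> Hom R A A'; b \<in> Hom R B B'; b \<cdot> f = f' \<cdot> a\<rbrakk>
      \<Longrightarrow> \<exists>c \<in> Hom R C C'. c \<cdot> g = g' \<cdot> b \<and> shM R a \<cdot> h = h' \<cdot> c"
  using right_triangulated unfolding right_triangulated_def by meson+

lemma add_zero_left: "\<lbrakk>A \<in> Ob R; B \<in> Ob R; f \<in> Hom R A B\<rbrakk> \<Longrightarrow> mzero R A B \<oplus> f = f"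
  by (metis add_commute add_zero_right zero_hom)

lemma add_neg_left: "\<lbrakk>A \<in> Ob R; B \<in> Ob R; f \<in> Hom R A B\<rbrakk> \<Longrightarrow> \<ominus> f \<oplus> f = mzero R A B"
  by (metis add_commute add_neg_right neg_hom)

lemma add_left_cancel:
  assumes ob: "A \<in> Ob R" "B \<in> Ob R" and hom: "f \<in> Hom R A B" "g \<in> Hom R A B" "k \<in> Hom R A B"
    and eq: "f \<oplus> g = f \<oplus> k"
  shows "g = k"
proof -
  have "g = (\<ominus> f \<oplus> f) \<oplus> g" using add_zero_left[OF ob hom(2)] add_neg_left[OF ob hom(1)] by simp
  also have "\<dots> = \<ominus> f \<oplus> (f \<oplus> g)" using add_assoc[OF ob neg_hom[OF ob hom(1)] hom(1,2)] .
  also have "\<dots> = (\<ominus> f \<oplus> f) \<oplus> k" using eq add_assoc[OF ob neg_hom[OF ob hom(1)] hom(1,3)] by simp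
  also have "\<dots> = k" using add_zero_left[OF ob hom(3)] add_neg_left[OF ob hom(1)] by simp
  finally show ?thesis .
qed

lemma neg_unique:
  assumes ob: "A \<in> Ob R" "B \<in> Ob R" and hom: "f \<in> Hom R A B" "g \<in> Hom R A B"
    and sum: "f \<oplus> g = mzero R A B"
  shows "g = \<ominus> f"
  using add_left_cancel[OF ob hom neg_hom[OF ob hom(1)]] sum add_neg_right[OF ob hom(1)] by simp

lemma neg_neg: "\<lbrakk>A \<in> Ob R; B \<in> Ob R; f \<in> Hom R A B\<rbrakk> \<Longrightarrow> \<ominus> \<ominus> f = f"
  by (metis add_neg_left neg_hom neg_unique)

lemma neg_zero: "\<lbrakk>A \<in> Ob R; B \<in> Ob R\<rbrakk> \<Longrightarrow> \<ominus> mzero R A B = mzero R A B"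
  by (metis add_zero_right neg_unique zero_hom)

lemma comp_zero_right:
  assumes ob: "A \<in> Ob R" "B \<in> Ob R" "C \<in> Ob R" and g: "g \<in> Hom R B C"
  shows "g \<cdot> mzero R A B = mzero R A C"
proof -
  have z: "mzero R A B \<in> Hom R A B" using zero_hom ob by blast
  have gz: "g \<cdot> mzero R A B \<in> Hom R A C" using comp_hom[OF ob z g] .
  have "g \<cdot> mzero R A B \<oplus> mzero R A C = g \<cdot> (mzero R A B \<oplus> mzero R A B)"
    using add_zero_right[OF ob(1,2) z] add_zero_right[OF ob(1,3) gz] by simp
  also have "\<dots> = g \<cdot> mzero R A B \<oplus> g \<cdot> mzero R A B" using comp_add_distrib_left[OF ob z z g] .
  finally show ?thesis using add_left_cancel[OF ob(1,3) gz zero_hom[OF ob(1,3)] gz] by simp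
qed

lemma comp_zero_left:
  assumes ob: "A \<in> Ob R" "B \<in> Ob R" "C \<in> Ob R" and f: "f \<in> Hom R A B"
  shows "mzero R B C \<cdot> f = mzero R A C"
proof -
  have z: "mzero R B C \<in> Hom R B C" using zero_hom ob by blast
  have zf: "mzero R B C \<cdot> f \<in> Hom R A C" using comp_hom[OF ob f z] .
  have "mzero R B C \<cdot> f \<oplus> mzero R A C = (mzero R B C \<oplus> mzero R B C) \<cdot> f"
    using add_zero_right[OF ob(2,3) z] add_zero_right[OF ob(1,3) zf] by simp
  also have "\<dots> = mzero R B C \<cdot> f \<oplus> mzero R B C \<cdot> f" using comp_add_distrib_right[OF ob f z z] .
  finally show ?thesis using add_left_cancel[OF ob(1,3) zf zero_hom[OF ob(1,3)] zf] by simp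
qed

lemma comp_neg_right:
  assumes ob: "A \<in> Ob R" "B \<in> Ob R" "C \<in> Ob R" and hom: "f \<in> Hom R A B" "g \<in> Hom R B C"
  shows "g \<cdot> \<ominus> f = \<ominus> (g \<cdot> f)"
proof (rule neg_unique[OF ob(1,3) comp_hom[OF ob hom] comp_hom[OF ob neg_hom[OF ob(1,2) hom(1)] hom(2)]])
  have "g \<cdot> f \<oplus> g \<cdot> \<ominus> f = g \<cdot> (f \<oplus> \<ominus> f)"
    using comp_add_distrib_left[OF ob hom(1) neg_hom[OF ob(1,2) hom(1)] hom(2)] by simp
  then show "g \<cdot> f \<oplus> g \<cdot> \<ominus> f = mzero R A C"
    using add_neg_right[OF ob(1,2) hom(1)] comp_zero_right[OF ob hom(2)] by simp
qed

lemma comp_neg_left: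
  assumes ob: "A \<in> Ob R" "B \<in> Ob R" "C \<in> Ob R" and hom: "f \<in> Hom R A B" "g \<in> Hom R B C"
  shows "(\<ominus> g) \<cdot> f = \<ominus> (g \<cdot> f)"
proof (rule neg_unique[OF ob(1,3) comp_hom[OF ob hom] comp_hom[OF ob hom(1) neg_hom[OF ob(2,3) hom(2)]]])
  have "g \<cdot> f \<oplus> (\<ominus> g) \<cdot> f = (g \<oplus> \<ominus> g) \<cdot> f"
    using comp_add_distrib_right[OF ob hom neg_hom[OF ob(2,3) hom(2)]] by simp
  then show "g \<cdot> f \<oplus> (\<ominus> g) \<cdot> f = mzero R A C"
    using add_neg_right[OF ob(2,3) hom(2)] comp_zero_left[OF ob hom(1)] by simp
qed

lemma invertible_if_square_zero_diff_id:
  assumes A: "A \<in> Ob R" and p: "p \<in> Hom R A A"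
    and sq: "(p \<oplus> \<ominus> idm R A) \<cdot> (p \<oplus> \<ominus> idm R A) = mzero R A A"
  shows "\<exists>q \<in> Hom R A A. q \<cdot> p = idm R A \<and> p \<cdot> q = idm R A"
proof -
  define n where "n = p \<oplus> \<ominus> idm R A"
  have I: "idm R A \<in> Hom R A A" using id_hom[OF A] .
  have nI: "\<ominus> idm R A \<in> Hom R A A" using neg_hom[OF A A I] .
  have n: "n \<in> Hom R A A" unfolding n_def using add_hom[OF A A p nI] .
  have nn: "n \<cdot> n = mzero R A A" using sq unfolding n_def .
  have n': "\<ominus> n \<in> Hom R A A" using neg_hom[OF A A n] .
  have p_eq: "p = n \<oplus> idm R A"
    unfolding n_def using add_assoc[OF A A p nI I] add_neg_left[OF A A I] add_zero_right[OF A A p] by simp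
  \<comment> \<open>p = 1 + n with n n = 0, so 1 - n is a two-sided inverse\<close>
  define q where "q = idm R A \<oplus> \<ominus> n"
  have q: "q \<in> Hom R A A" unfolding q_def using add_hom[OF A A I n'] .
  have n_plus_q: "n \<oplus> q = idm R A"
    unfolding q_def using add_commute[OF A A I n'] add_assoc[OF A A n n' I] add_neg_right[OF A A n]
      add_zero_left[OF A A I] by simp
  have "n \<cdot> q = n"
    unfolding q_def using comp_add_distrib_left[OF A A A I n' n] id_right[OF A A n]
      comp_neg_right[OF A A A n n] nn neg_zero[OF A A] add_zero_right[OF A A n] by simp
  then have "p \<cdot> q = idm R A"
    using p_eq comp_add_distrib_right[OF A A A q n I] id_left[OF A A q] n_plus_q by simp
  moreover have "q \<cdot> n = n"
    unfolding q_def using comp_add_distrib_right[OF A A A n I n'] id_left[OF A A n]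
      comp_neg_left[OF A A A n n] nn neg_zero[OF A A] add_zero_right[OF A A n] by simp
  then have "q \<cdot> p = idm R A"
    using p_eq comp_add_distrib_left[OF A A A n I q] id_right[OF A A q] n_plus_q by simp
  ultimately show ?thesis using q by blast
qed

lemma iso_morI:
  assumes ob: "A \<in> Ob R" "B \<in> Ob R" and f: "f \<in> Hom R A B"
    and l: "l \<in> Hom R B A" "l \<cdot> f = idm R A" and r: "r \<in> Hom R B A" "f \<cdot> r = idm R B"
  shows "iso_mor R A B f"
proof -
  have "l = l \<cdot> (f \<cdot> r)" using r(2) id_right[OF ob(2,1) l(1)] by simp
  also have "\<dots> = r" using comp_assoc[OF ob(2,1,2,1) r(1) f l(1)] l(2) id_left[OF ob(2,1) r(1)] by simp
  finally show ?thesis unfolding iso_mor_def using f l r by blast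
qed

lemma isomorphic_refl: "A \<in> Ob R \<Longrightarrow> isomorphic R A A"
  unfolding isomorphic_def iso_mor_def using id_hom id_left by blast

lemma isomorphic_sym: "isomorphic R A B \<Longrightarrow> isomorphic R B A"
  unfolding isomorphic_def iso_mor_def by blast

lemma isomorphic_trans:
  assumes "isomorphic R A B" "isomorphic R B C"
  shows "isomorphic R A C"
proof -
  obtain f f' where ob: "A \<in> Ob R" "B \<in> Ob R" and f: "f \<in> Hom R A B" "f' \<in> Hom R B A"
    and ff: "f' \<cdot> f = idm R A" "f \<cdot> f' = idm R B"
    using assms(1) unfolding isomorphic_def iso_mor_def by blast
  obtain g g' where C: "C \<in> Ob R" and g: "g \<in> Hom R B C" "g' \<in> Hom R C B"
    and gg: "g' \<cdot> g = idm R B" "g \<cdot> g' = idm R C"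
    using assms(2) unfolding isomorphic_def iso_mor_def by blast
  have "(f' \<cdot> g') \<cdot> (g \<cdot> f) = f' \<cdot> ((g' \<cdot> g) \<cdot> f)"
    using comp_assoc[OF ob(1) C ob(2,1) comp_hom[OF ob C f(1) g(1)] g(2) f(2)]
      comp_assoc[OF ob C ob(2) f(1) g] by simp
  then have left: "(f' \<cdot> g') \<cdot> (g \<cdot> f) = idm R A" using gg(1) id_left[OF ob f(1)] ff(1) by simp
  have "(g \<cdot> f) \<cdot> (f' \<cdot> g') = g \<cdot> ((f \<cdot> f') \<cdot> g')"
    using comp_assoc[OF C ob(1,2) C comp_hom[OF C ob(2,1) g(2) f(2)] f(1) g(1)]
      comp_assoc[OF C ob(2,1,2) g(2) f(2) f(1)] by simp
  then have right: "(g \<cdot> f) \<cdot> (f' \<cdot> g') = idm R C" using ff(2) id_left[OF C ob(2) g(2)] gg(2) by simp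
  show ?thesis unfolding isomorphic_def iso_mor_def
    using ob C comp_hom[OF ob C f(1) g(1)] comp_hom[OF C ob(2,1) g(2) f(2)] left right by blast
qed

lemma isomorphic_shift:
  assumes "isomorphic R A B"
  shows "isomorphic R (shO R A) (shO R B)"
proof -
  obtain f f' where ob: "A \<in> Ob R" "B \<in> Ob R" and f: "f \<in> Hom R A B" "f' \<in> Hom R B A"
    and ff: "f' \<cdot> f = idm R A" "f \<cdot> f' = idm R B"
    using assms unfolding isomorphic_def iso_mor_def by blast
  have "shM R f' \<cdot> shM R f = idm R (shO R A)" "shM R f \<cdot> shM R f' = idm R (shO R B)"
    using shift_comp[OF ob ob(1) f] shift_comp[OF ob(2,1,2) f(2,1)] ff shift_id ob by simp_all
  then show ?thesis unfolding isomorphic_def iso_mor_def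
    using shift_ob ob shift_hom[OF ob f(1)] shift_hom[OF ob(2,1) f(2)] by blast
qed

lemma funpow_shift_ob: "A \<in> Ob R \<Longrightarrow> (shO R ^^ n) A \<in> Ob R"
  by (induction n) (auto simp: shift_ob)

lemma funpow_shift_hom:
  "\<lbrakk>A \<in> Ob R; B \<in> Ob R; f \<in> Hom R A B\<rbrakk> \<Longrightarrow> (shM R ^^ n) f \<in> Hom R ((shO R ^^ n) A) ((shO R ^^ n) B)"
  by (induction n) (auto intro: shift_hom funpow_shift_ob)

lemma funpow_shift_id: "A \<in> Ob R \<Longrightarrow> (shM R ^^ n) (idm R A) = idm R ((shO R ^^ n) A)"
  by (induction n) (auto simp: shift_id funpow_shift_ob)

lemma isomorphic_funpow_shift: "isomorphic R A B \<Longrightarrow> isomorphic R ((shO R ^^ n) A) ((shO R ^^ n) B)"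
  by (induction n) (auto simp: isomorphic_shift)

text \<open>Rotating three times shifts a triangle, with all three maps negated.\<close>

lemma tri_shift:
  "(A, B, C, f, g, h) \<in> Tri R \<Longrightarrow> (shO R A, shO R B, shO R C, \<ominus> shM R f, \<ominus> shM R g, \<ominus> shM R h) \<in> Tri R"
  by (intro tri_rotate)

lemma tri_funpow_shift:
  "(A, B, C, f, g, h) \<in> Tri R \<Longrightarrow>
    \<exists>f' g' h'. ((shO R ^^ n) A, (shO R ^^ n) B, (shO R ^^ n) C, f', g', h') \<in> Tri R"
proof (induction n)
  case (Suc n)
  then obtain f' g' h' where "((shO R ^^ n) A, (shO R ^^ n) B, (shO R ^^ n) C, f', g', h') \<in> Tri R"
    by blast
  from tri_shift[OF this] show ?case by auto
qed auto

lemma lvl_ob: "fst X \<in> Ob R \<Longrightarrow> lvl R k X \<in> Ob R"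
  unfolding lvl_def by (rule funpow_shift_ob)

lemma funpow_shift_lvl:
  assumes "k \<le> j" "j \<le> snd X"
  shows "(shO R ^^ nat (j - k)) (lvl R j X) = lvl R k X"
proof -
  have "nat (snd X - k) = nat (j - k) + nat (snd X - j)" using assms by simp
  then show ?thesis unfolding lvl_def by (simp add: funpow_add)
qed

lemma funpow_shift_id_lvl: "fst X \<in> Ob R \<Longrightarrow> (shM R ^^ nat (snd X - k)) (idm R (fst X)) = idm R (lvl R k X)"
  unfolding lvl_def by (rule funpow_shift_id)

lemma S_iso_eventually_isomorphic:
  assumes "S_iso R X Y a"
  shows "\<forall>\<^sub>F k in at_bot. isomorphic R (lvl R k X) (lvl R k Y)"
proof -
  obtain b where Sa: "S_hom R X Y a" and Sb: "S_hom R Y X b"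
    and ba: "S_eq R (S_comp R b a) (S_id R X)" and ab: "S_eq R (S_comp R a b) (S_id R Y)"
    using assms unfolding S_iso_def by blast
  obtain ka f kb g where a: "a = (ka, f)" and b: "b = (kb, g)" by fastforce
  have X: "fst X \<in> Ob R" and Y: "fst Y \<in> Ob R" using Sa unfolding S_hom_def S_obj_def by auto
  have ka: "ka \<le> snd X" "ka \<le> snd Y" and f: "f \<in> Hom R (lvl R ka X) (lvl R ka Y)"
    using Sa a unfolding S_hom_def by auto
  have kb: "kb \<le> snd X" "kb \<le> snd Y" and g: "g \<in> Hom R (lvl R kb Y) (lvl R kb X)"
    using Sb b unfolding S_hom_def by auto
  define j where "j = min ka kb"
  define F where "F = (shM R ^^ nat (ka - j)) f"
  define G where "G = (shM R ^^ nat (kb - j)) g"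
  have F: "F \<in> Hom R (lvl R j X) (lvl R j Y)"
    using funpow_shift_hom[OF lvl_ob[OF X] lvl_ob[OF Y] f, of "nat (ka - j)"] funpow_shift_lvl ka
    unfolding F_def j_def by simp
  have G: "G \<in> Hom R (lvl R j Y) (lvl R j X)"
    using funpow_shift_hom[OF lvl_ob[OF Y] lvl_ob[OF X] g, of "nat (kb - j)"] funpow_shift_lvl kb
    unfolding G_def j_def by simp
  have jX: "min j (snd X) = j" and jY: "min j (snd Y) = j" and jj: "min kb ka = j"
    using ka unfolding j_def by auto
  have "G \<cdot> F = idm R (lvl R j X)"
    using ba funpow_shift_id_lvl[OF X, of j] jX
    unfolding S_eq_def S_comp_def S_id_def at_lvl_def a b Let_def F_def G_def j_def by simp
  moreover have "F \<cdot> G = idm R (lvl R j Y)"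
    using ab funpow_shift_id_lvl[OF Y, of j] jY jj
    unfolding S_eq_def S_comp_def S_id_def at_lvl_def a b Let_def F_def G_def by simp
  ultimately have iso: "isomorphic R (lvl R j X) (lvl R j Y)"
    unfolding isomorphic_def iso_mor_def using F G lvl_ob X Y by blast
  show ?thesis
  proof (rule eventually_at_bot_linorderI)
    fix k assume "k \<le> j"
    then show "isomorphic R (lvl R k X) (lvl R k Y)"
      using isomorphic_funpow_shift[OF iso, of "nat (j - k)"] funpow_shift_lvl[of k j] ka
      unfolding j_def by simp
  qed
qed

lemma S_isomorphicI_lvl:
  assumes X: "fst X \<in> Ob R" and Y: "fst Y \<in> Ob R" and k: "k \<le> snd X" "k \<le> snd Y"
    and iso: "isomorphic R (lvl R k X) (lvl R k Y)"
  shows "S_isomorphic R X Y"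
proof -
  obtain f g where f: "f \<in> Hom R (lvl R k X) (lvl R k Y)" and g: "g \<in> Hom R (lvl R k Y) (lvl R k X)"
    and gf: "g \<cdot> f = idm R (lvl R k X)" and fg: "f \<cdot> g = idm R (lvl R k Y)"
    using iso unfolding isomorphic_def iso_mor_def by blast
  have "S_iso R X Y (k, f)"
    unfolding S_iso_def
  proof (intro conjI exI[of _ "(k, g)"])
    show "S_hom R X Y (k, f)" "S_hom R Y X (k, g)" unfolding S_hom_def S_obj_def using X Y k f g by auto
    show "S_eq R (S_comp R (k, g) (k, f)) (S_id R X)" "S_eq R (S_comp R (k, f) (k, g)) (S_id R Y)"
      unfolding S_eq_def S_comp_def S_id_def at_lvl_def Let_def
      using gf fg funpow_shift_id_lvl[OF X] funpow_shift_id_lvl[OF Y] k by simp_all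
  qed
  then show ?thesis unfolding S_isomorphic_def by blast
qed

lemma S_tri_eventually_isomorphic_tri:
  assumes "S_tri R X Y Z x y z"
  shows "\<forall>\<^sub>F K in at_bot. \<exists>P Q C f g h. (P, Q, C, f, g, h) \<in> Tri R \<and>
    isomorphic R (lvl R K X) P \<and> isomorphic R (lvl R K Y) Q \<and> isomorphic R (lvl R K Z) C"
proof -
  obtain X' Y' Z' x' y' z' a b c where std: "S_std_tri R X' Y' Z' x' y' z'"
    and a: "S_iso R X X' a" and b: "S_iso R Y Y' b" and c: "S_iso R Z Z' c"
    using assms unfolding S_tri_def by blast
  obtain k f g h where k: "k \<le> snd X'" "k \<le> snd Y'" "k \<le> snd Z'"
    and T: "(lvl R k X', lvl R k Y', lvl R k Z', f, g, h) \<in> Tri R"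
    using std unfolding S_std_tri_def by blast
  show ?thesis
    using S_iso_eventually_isomorphic[OF a] S_iso_eventually_isomorphic[OF b]
      S_iso_eventually_isomorphic[OF c] eventually_le_at_bot[of k]
  proof eventually_elim
    case (elim K)
    then obtain f' g' h' where "(lvl R K X', lvl R K Y', lvl R K Z', f', g', h') \<in> Tri R"
      using tri_funpow_shift[OF T, of "nat (k - K)"] funpow_shift_lvl[of K k] k by auto
    then show ?case using elim by blast
  qed
qed

end

locale fully_faithful_shift = right_triangulated_cat +
  assumes shift_bij: "\<lbrakk>A \<in> Ob R; B \<in> Ob R\<rbrakk> \<Longrightarrow> bij_betw (shM R) (Hom R A B) (Hom R (shO R A) (shO R B))"
begin

lemma shift_inj:
  "\<lbrakk>A \<in> Ob R; B \<in> Ob R; f \<in> Hom R A B; g \<in> Hom R A B; shM R f = shM R g\<rbrakk> \<Longrightarrow> f = g"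
  using shift_bij unfolding bij_betw_def inj_on_def by blast

lemma shift_full:
  "\<lbrakk>A \<in> Ob R; B \<in> Ob R; F \<in> Hom R (shO R A) (shO R B)\<rbrakk> \<Longrightarrow> \<exists>f \<in> Hom R A B. F = shM R f"
  using shift_bij unfolding bij_betw_def by blast

lemma isomorphic_unshift:
  assumes iso: "isomorphic R (shO R A) (shO R B)" and ob: "A \<in> Ob R" "B \<in> Ob R"
  shows "isomorphic R A B"
proof -
  obtain F F' where F: "F \<in> Hom R (shO R A) (shO R B)" "F' \<in> Hom R (shO R B) (shO R A)"
    and FF: "F' \<cdot> F = idm R (shO R A)" "F \<cdot> F' = idm R (shO R B)"
    using iso unfolding isomorphic_def iso_mor_def by blast
  obtain f f' where f: "f \<in> Hom R A B" "F = shM R f" and f': "f' \<in> Hom R B A" "F' = shM R f'"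
    using shift_full[OF ob F(1)] shift_full[OF ob(2,1) F(2)] by blast
  have "f' \<cdot> f = idm R A"
    using shift_inj[OF ob(1,1) comp_hom[OF ob ob(1) f(1) f'(1)] id_hom[OF ob(1)]]
      shift_comp[OF ob ob(1) f(1) f'(1)] shift_id[OF ob(1)] f(2) f'(2) FF(1) by simp
  moreover have "f \<cdot> f' = idm R B"
    using shift_inj[OF ob(2,2) comp_hom[OF ob(2,1,2) f'(1) f(1)] id_hom[OF ob(2)]]
      shift_comp[OF ob(2,1,2) f'(1) f(1)] shift_id[OF ob(2)] f(2) f'(2) FF(2) by simp
  ultimately show ?thesis unfolding isomorphic_def iso_mor_def using f(1) f'(1) ob by blast
qed

lemma tri_factor_first:
  assumes T: "(A, B, C, f, g, h) \<in> Tri R" and W: "W \<in> Ob R" and u: "u \<in> Hom R W B"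
    and gu: "g \<cdot> u = mzero R W C"
  shows "\<exists>t \<in> Hom R W A. u = f \<cdot> t"
proof -
  have A: "A \<in> Ob R" and B: "B \<in> Ob R" and C: "C \<in> Ob R" and f: "f \<in> Hom R A B"
    using tri_well_typed[OF T] by auto
  obtain Z where Z: "is_zero_obj R Z" using zero_object_exists by blast
  have Z_ob: "Z \<in> Ob R" using Z unfolding is_zero_obj_def by blast
  \<comment> \<open>compare the rotated trivial triangle on W with the rotated triangle, via (u, 0)\<close>
  have "mzero R Z C \<cdot> mzero R W Z = g \<cdot> u" using comp_zero_left[OF W Z_ob C zero_hom[OF W Z_ob]] gu by simp
  then obtain c where c: "c \<in> Hom R (shO R W) (shO R A)"
    and comm: "shM R u \<cdot> \<ominus> shM R (idm R W) = (\<ominus> shM R f) \<cdot> c"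
    using tri_morphism[OF tri_rotate[OF tri_trivial[OF W Z]] tri_rotate[OF T] u zero_hom[OF Z_ob C]]
    by blast
  obtain t where t: "t \<in> Hom R W A" and c_eq: "c = shM R t" using shift_full[OF W A c] by blast
  have SW: "shO R W \<in> Ob R" and SA: "shO R A \<in> Ob R" and SB: "shO R B \<in> Ob R"
    using shift_ob W A B by auto
  have Su: "shM R u \<in> Hom R (shO R W) (shO R B)" using shift_hom[OF W B u] .
  have ft: "f \<cdot> t \<in> Hom R W B" using comp_hom[OF W A B t f] .
  have "\<ominus> shM R u = shM R u \<cdot> \<ominus> shM R (idm R W)"
    using comp_neg_right[OF SW SW SB id_hom[OF SW] Su] shift_id[OF W] id_right[OF SW SB Su] by simp
  also have "\<dots> = \<ominus> shM R (f \<cdot> t)"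
    using comm c_eq comp_neg_left[OF SW SA SB shift_hom[OF W A t] shift_hom[OF A B f]]
      shift_comp[OF W A B t f] by simp
  finally have "shM R u = shM R (f \<cdot> t)"
    using neg_neg[OF SW SB Su] neg_neg[OF SW SB shift_hom[OF W B ft]] by metis
  then show ?thesis using shift_inj[OF W B u ft] t by blast
qed

lemma tri_factor_second:
  "\<lbrakk>(A, B, C, f, g, h) \<in> Tri R; W \<in> Ob R; u \<in> Hom R W C; h \<cdot> u = mzero R W (shO R A)\<rbrakk>
    \<Longrightarrow> \<exists>t \<in> Hom R W B. u = g \<cdot> t"
  by (rule tri_factor_first[OF tri_rotate])

lemma tri_endo_invertible:
  assumes T: "(A, B, C, f, g, h) \<in> Tri R" and p: "p \<in> Hom R C C"
    and pg: "p \<cdot> g = g" and hp: "h \<cdot> p = h"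
  shows "\<exists>q \<in> Hom R C C. q \<cdot> p = idm R C \<and> p \<cdot> q = idm R C"
proof -
  have A: "A \<in> Ob R" and B: "B \<in> Ob R" and C: "C \<in> Ob R" and g: "g \<in> Hom R B C"
    and h: "h \<in> Hom R C (shO R A)"
    using tri_well_typed[OF T] by auto
  have SA: "shO R A \<in> Ob R" using shift_ob[OF A] .
  have I: "idm R C \<in> Hom R C C" using id_hom[OF C] .
  define n where "n = p \<oplus> \<ominus> idm R C"
  have n: "n \<in> Hom R C C" unfolding n_def using add_hom[OF C C p neg_hom[OF C C I]] .
  have "h \<cdot> n = h \<oplus> \<ominus> h"
    unfolding n_def using comp_add_distrib_left[OF C C SA p neg_hom[OF C C I] h] hp
      comp_neg_right[OF C C SA I h] id_right[OF C SA h] by simp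
  then obtain s where s: "s \<in> Hom R C B" and n_eq: "n = g \<cdot> s"
    using tri_factor_second[OF T C n] add_neg_right[OF C SA h] by auto
  have "n \<cdot> g = g \<oplus> \<ominus> g"
    unfolding n_def using comp_add_distrib_right[OF B C C g p neg_hom[OF C C I]] pg
      comp_neg_left[OF B C C g I] id_left[OF B C g] by simp
  then have "n \<cdot> g = mzero R B C" using add_neg_right[OF B C g] by simp
  then have "n \<cdot> n = mzero R C C"
    using n_eq comp_assoc[OF C B C C s g n] comp_zero_left[OF C B C s] by simp
  then show ?thesis using invertible_if_square_zero_diff_id[OF C p] unfolding n_def by blast
qed

lemma tri_morphism_roundtrip_invertible:
  assumes T: "(A, B, C, f, g, h) \<in> Tri R" and T': "(A', B', C', f', g', h') \<in> Tri R"
    and a: "a \<in> Hom R A A'" "a' \<in> Hom R A' A" "a' \<cdot> a = idm R A"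
    and b: "b \<in> Hom R B B'" "b' \<in> Hom R B' B" "b' \<cdot> b = idm R B"
    and c: "c \<in> Hom R C C'" "c \<cdot> g = g' \<cdot> b" "shM R a \<cdot> h = h' \<cdot> c"
    and c': "c' \<in> Hom R C' C" "c' \<cdot> g' = g \<cdot> b'" "shM R a' \<cdot> h' = h \<cdot> c'"
  shows "\<exists>u \<in> Hom R C C. u \<cdot> (c' \<cdot> c) = idm R C \<and> (c' \<cdot> c) \<cdot> u = idm R C"
proof -
  have A: "A \<in> Ob R" and B: "B \<in> Ob R" and C: "C \<in> Ob R" and g: "g \<in> Hom R B C"
    and h: "h \<in> Hom R C (shO R A)"
    using tri_well_typed[OF T] by auto
  have A': "A' \<in> Ob R" and B': "B' \<in> Ob R" and C': "C' \<in> Ob R" and g': "g' \<in> Hom R B' C'"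
    and h': "h' \<in> Hom R C' (shO R A')"
    using tri_well_typed[OF T'] by auto
  have SA: "shO R A \<in> Ob R" and SA': "shO R A' \<in> Ob R" using shift_ob A A' by auto
  have "(c' \<cdot> c) \<cdot> g = (c' \<cdot> g') \<cdot> b"
    using comp_assoc[OF B C C' C g c(1) c'(1)] c(2) comp_assoc[OF B B' C' C b(1) g' c'(1)] by simp
  also have "\<dots> = g \<cdot> (b' \<cdot> b)" using c'(2) comp_assoc[OF B B' B C b(1) b(2) g] by simp
  finally have fixes_g: "(c' \<cdot> c) \<cdot> g = g" using b(3) id_right[OF B C g] by simp
  have "h \<cdot> (c' \<cdot> c) = shM R a' \<cdot> (h' \<cdot> c)"
    using comp_assoc[OF C C' C SA c(1) c'(1) h] c'(3)
      comp_assoc[OF C C' SA' SA c(1) h' shift_hom[OF A' A a(2)]] by simp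
  also have "\<dots> = shM R (a' \<cdot> a) \<cdot> h"
    using c(3) comp_assoc[OF C SA SA' SA h shift_hom[OF A A' a(1)] shift_hom[OF A' A a(2)]]
      shift_comp[OF A A' A a(1,2)] by simp
  finally have fixes_h: "h \<cdot> (c' \<cdot> c) = h" using a(3) shift_id[OF A] id_left[OF C SA h] by simp
  show ?thesis using tri_endo_invertible[OF T comp_hom[OF C C' C c(1) c'(1)] fixes_g fixes_h] .
qed

lemma tri_third_isomorphic:
  assumes T: "(A, B, C, f, g, h) \<in> Tri R" and T': "(A', B', C', f', g', h') \<in> Tri R"
    and a: "iso_mor R A A' a" and b: "iso_mor R B B' b" and comm: "b \<cdot> f = f' \<cdot> a"
  shows "isomorphic R C C'"
proof -
  have A: "A \<in> Ob R" and B: "B \<in> Ob R" and C: "C \<in> Ob R" and f: "f \<in> Hom R A B"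
    using tri_well_typed[OF T] by auto
  have A': "A' \<in> Ob R" and B': "B' \<in> Ob R" and C': "C' \<in> Ob R" and f': "f' \<in> Hom R A' B'"
    using tri_well_typed[OF T'] by auto
  obtain a' where ha: "a \<in> Hom R A A'" and a': "a' \<in> Hom R A' A" "a' \<cdot> a = idm R A" "a \<cdot> a' = idm R A'"
    using a unfolding iso_mor_def by blast
  obtain b' where hb: "b \<in> Hom R B B'" and b': "b' \<in> Hom R B' B" "b' \<cdot> b = idm R B" "b \<cdot> b' = idm R B'"
    using b unfolding iso_mor_def by blast
  obtain c where c: "c \<in> Hom R C C'" "c \<cdot> g = g' \<cdot> b" "shM R a \<cdot> h = h' \<cdot> c"
    using tri_morphism[OF T T' ha hb comm] by blast
  have "b' \<cdot> f' = b' \<cdot> ((b \<cdot> f) \<cdot> a')"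
    using comm a'(3) comp_assoc[OF A' A A' B' a'(1) ha f'] id_right[OF A' B' f'] by simp
  also have "\<dots> = f \<cdot> a'"
    using comp_assoc[OF A' A B' B a'(1) comp_hom[OF A B B' f hb] b'(1)]
      comp_assoc[OF A B B' B f hb b'(1)] b'(2) id_left[OF A B f] by simp
  finally obtain c' where c': "c' \<in> Hom R C' C" "c' \<cdot> g' = g \<cdot> b'" "shM R a' \<cdot> h' = h \<cdot> c'"
    using tri_morphism[OF T' T a'(1) b'(1)] by blast
  obtain u where u: "u \<in> Hom R C C" "u \<cdot> (c' \<cdot> c) = idm R C"
    using tri_morphism_roundtrip_invertible[OF T T' ha a'(1,2) hb b'(1,2) c c'] by blast
  obtain v where v: "v \<in> Hom R C' C'" "(c \<cdot> c') \<cdot> v = idm R C'"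
    using tri_morphism_roundtrip_invertible[OF T' T a'(1) ha a'(3) b'(1) hb b'(3) c' c] by blast
  have "(u \<cdot> c') \<cdot> c = idm R C" using comp_assoc[OF C C' C C c(1) c'(1) u(1)] u(2) by simp
  moreover have "c \<cdot> (c' \<cdot> v) = idm R C'" using comp_assoc[OF C' C' C C' v(1) c'(1) c(1)] v(2) by simp
  ultimately have "iso_mor R C C' c"
    using iso_morI[OF C C' c(1) comp_hom[OF C' C C c'(1) u(1)] _ comp_hom[OF C' C' C v(1) c'(1)]] by blast
  then show ?thesis unfolding isomorphic_def using C C' by blast
qed

end

locale right_semi_equivalent_cat = right_triangulated_cat +
  assumes right_semi_equivalence: "right_semi_equivalence R"

sublocale right_semi_equivalent_cat \<subseteq> fully_faithful_shift
proof
  fix A B assume "A \<in> Ob R" "B \<in> Ob R"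
  then show "bij_betw (shM R) (Hom R A B) (Hom R (shO R A) (shO R B))"
    using right_semi_equivalence unfolding right_semi_equivalence_def by blast
qed

context right_semi_equivalent_cat
begin

lemma shift_image_extension_closed:
  "\<lbrakk>(A, B, C, f, g, h) \<in> Tri R; A \<in> ess_image_shift R; C \<in> ess_image_shift R\<rbrakk>
    \<Longrightarrow> B \<in> ess_image_shift R"
  using right_semi_equivalence unfolding right_semi_equivalence_def by blast

lemma tri_desuspend:
  assumes T: "(P, Q, C, f, g, h) \<in> Tri R"
    and P1: "P1 \<in> Ob R" "isomorphic R P (shO R P1)"
    and C1': "C1' \<in> Ob R" "isomorphic R C (shO R C1')"
  shows "\<exists>Q1 C1 f1 g1 h1. (P1, Q1, C1, f1, g1, h1) \<in> Tri R \<and>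
    isomorphic R Q (shO R Q1) \<and> isomorphic R C1 C1'"
proof -
  have P: "P \<in> Ob R" and Q: "Q \<in> Ob R" and C: "C \<in> Ob R" and f: "f \<in> Hom R P Q"
    using tri_well_typed[OF T] by auto
  have "Q \<in> ess_image_shift R"
    using shift_image_extension_closed[OF T] P C P1 C1' unfolding ess_image_shift_def by blast
  then obtain Q1 where Q1: "Q1 \<in> Ob R" and isoQ: "isomorphic R Q (shO R Q1)"
    unfolding ess_image_shift_def by blast
  have SP1: "shO R P1 \<in> Ob R" and SQ1: "shO R Q1 \<in> Ob R" using shift_ob P1(1) Q1 by auto
  obtain p p' where p: "iso_mor R P (shO R P1) p" "p' \<in> Hom R (shO R P1) P" "p' \<cdot> p = idm R P"
    using P1(2) unfolding isomorphic_def iso_mor_def by blast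
  obtain q where q: "iso_mor R Q (shO R Q1) q" using isoQ unfolding isomorphic_def by blast
  have p_hom: "p \<in> Hom R P (shO R P1)" and q_hom: "q \<in> Hom R Q (shO R Q1)"
    using p(1) q unfolding iso_mor_def by auto
  \<comment> \<open>desuspend the transported map q f p', with a sign to match the shifted triangle\<close>
  define u where "u = q \<cdot> (f \<cdot> p')"
  have u: "u \<in> Hom R (shO R P1) (shO R Q1)"
    unfolding u_def using comp_hom[OF SP1 Q SQ1 comp_hom[OF SP1 P Q p(2) f] q_hom] .
  obtain f1 where f1: "f1 \<in> Hom R P1 Q1" and Sf1: "\<ominus> u = shM R f1"
    using shift_full[OF P1(1) Q1 neg_hom[OF SP1 SQ1 u]] by blast
  obtain C1 g1 h1 where T1: "(P1, Q1, C1, f1, g1, h1) \<in> Tri R"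
    using tri_exists[OF P1(1) Q1 f1] by blast
  have C1: "C1 \<in> Ob R" using tri_well_typed[OF T1] by blast
  have "(\<ominus> shM R f1) \<cdot> p = q \<cdot> ((f \<cdot> p') \<cdot> p)"
    using Sf1[symmetric] neg_neg[OF SP1 SQ1 u] unfolding u_def
    using comp_assoc[OF P SP1 Q SQ1 p_hom comp_hom[OF SP1 P Q p(2) f] q_hom] by simp
  also have "\<dots> = q \<cdot> f" using comp_assoc[OF P SP1 P Q p_hom p(2) f] p(3) id_right[OF P Q f] by simp
  finally have "isomorphic R C (shO R C1)"
    using tri_third_isomorphic[OF T tri_shift[OF T1] p(1) q] by simp
  then have "isomorphic R C1 C1'"
    using isomorphic_unshift[OF _ C1 C1'(1)] isomorphic_trans isomorphic_sym C1'(2) by blast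
  then show ?thesis using T1 isoQ by blast
qed

lemma tri_middle_funpow_shift:
  assumes "(P, Q, C, f, g, h) \<in> Tri R" and "P0 \<in> Ob R" "C0 \<in> Ob R"
    and "isomorphic R P ((shO R ^^ t) P0)" "isomorphic R C ((shO R ^^ t) C0)"
  shows "\<exists>Q0 \<in> Ob R. isomorphic R Q ((shO R ^^ t) Q0)"
  using assms
proof (induction t arbitrary: P Q C f g h)
  case 0
  then show ?case using tri_well_typed isomorphic_refl by fastforce
next
  case (Suc t)
  obtain Q1 C1 f1 g1 h1 where T1: "((shO R ^^ t) P0, Q1, C1, f1, g1, h1) \<in> Tri R"
    and isoQ: "isomorphic R Q (shO R Q1)" and isoC1: "isomorphic R C1 ((shO R ^^ t) C0)"
    using tri_desuspend[OF Suc.prems(1) funpow_shift_ob[OF Suc.prems(2), of t] _ funpow_shift_ob[OF Suc.prems(3), of t]]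
      Suc.prems(4,5) by auto
  obtain Q0 where "Q0 \<in> Ob R" "isomorphic R Q1 ((shO R ^^ t) Q0)"
    using Suc.IH[OF T1 Suc.prems(2,3) isomorphic_refl[OF funpow_shift_ob] isoC1] Suc.prems(2) by blast
  then show ?case using isomorphic_trans[OF isoQ isomorphic_shift] by auto
qed

lemma in_R_extension_closed:
  assumes tri: "S_tri R X Y Z x y z" and "in_R R X" "in_R R Z"
  shows "in_R R Y"
proof -
  obtain A a C c where A: "A \<in> Ob R" "S_iso R X (A, 0) a" and C: "C \<in> Ob R" "S_iso R Z (C, 0) c"
    using assms(2,3) unfolding in_R_def S_isomorphic_def by blast
  have Y: "fst Y \<in> Ob R" using tri unfolding S_tri_def S_hom_def S_obj_def by blast
  have "\<forall>\<^sub>F K in at_bot. K \<le> 0 \<and> K \<le> snd Y \<and>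
      isomorphic R (lvl R K X) (lvl R K (A, 0)) \<and> isomorphic R (lvl R K Z) (lvl R K (C, 0)) \<and>
      (\<exists>P Q C' f g h. (P, Q, C', f, g, h) \<in> Tri R \<and>
        isomorphic R (lvl R K X) P \<and> isomorphic R (lvl R K Y) Q \<and> isomorphic R (lvl R K Z) C')"
    using S_iso_eventually_isomorphic[OF A(2)] S_iso_eventually_isomorphic[OF C(2)]
      S_tri_eventually_isomorphic_tri[OF tri] by (auto intro!: eventually_conj)
  then obtain K where K: "K \<le> 0" "K \<le> snd Y"
    and isoA: "isomorphic R (lvl R K X) (lvl R K (A, 0))"
    and isoC: "isomorphic R (lvl R K Z) (lvl R K (C, 0))"
    and "\<exists>P Q C' f g h. (P, Q, C', f, g, h) \<in> Tri R \<and>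
      isomorphic R (lvl R K X) P \<and> isomorphic R (lvl R K Y) Q \<and> isomorphic R (lvl R K Z) C'"
    using eventually_happens'[OF trivial_limit_at_bot_linorder] by blast
  then obtain P Q C' f g h where T: "(P, Q, C', f, g, h) \<in> Tri R" and isoP: "isomorphic R (lvl R K X) P"
    and isoQ: "isomorphic R (lvl R K Y) Q" and isoC': "isomorphic R (lvl R K Z) C'"
    by blast
  have lvl0: "lvl R K (B, 0) = (shO R ^^ nat (- K)) B" for B unfolding lvl_def by simp
  have "isomorphic R P ((shO R ^^ nat (- K)) A)" "isomorphic R C' ((shO R ^^ nat (- K)) C)"
    using isomorphic_trans[OF isomorphic_sym[OF isoP] isoA] isomorphic_trans[OF isomorphic_sym[OF isoC'] isoC]
    unfolding lvl0 by auto
  then obtain Q0 where Q0: "Q0 \<in> Ob R" "isomorphic R Q ((shO R ^^ nat (- K)) Q0)"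
    using tri_middle_funpow_shift[OF T A(1) C(1)] by blast
  then have "S_isomorphic R Y (Q0, 0)"
    using S_isomorphicI_lvl[OF Y, of "(Q0, 0)" K] K isomorphic_trans[OF isoQ] lvl0 by simp
  then show ?thesis unfolding in_R_def using Q0 by blast
qed

end

theorem mainTheorem14:
  fixes R :: "('o, 'm) rtcat"
  assumes "right_triangulated R"
    and "right_semi_equivalence R"
    and "S_tri R X Y Z x y z"
    and "in_R R X"
    and "in_R R Z"
  shows "in_R R Y"
proof -
  interpret right_semi_equivalent_cat R
    by unfold_locales (fact assms)+
  show ?thesis using in_R_extension_closed assms(3-5) .
qed

end
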